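(* Let $S\subseteq\{0,1,\dots,\omega\}$ and $\alpha\in\{0,1,\dots,\omega\}\setminus S$. Every RC$_S$-model $(W,(R_\beta)_{\beta\in S},v)$ can be expanded, by adding a suitable relation $R_\alpha$ on $W$ (keeping $W$, the relations $R_\beta$ and the valuation $v$ unchanged), to an RC$_{S\cup\{\alpha\}}$-model.
   Context: A Kripke model for signature $S$: nonempty $W$, relations $(R_\beta)_{\beta\in S}$, valuation. An RC$_S$-frame satisfies, for all $\beta,\gamma\in S$: $R_\beta R_\gamma\subseteq R_{\min(\beta,\gamma)}$ (polytransitivity); if $\beta>\gamma$ then $xR_\beta y$ and $xR_\gamma z$ imply $yR_\gamma z$ (condition J); and $R_\beta\subseteq R_\gamma$ whenever $\gamma<\beta$ (monotonicity). An RC$_S$-model is a Kripke model on an RC$_S$-frame. *)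

theory Defs
  imports Main "HOL-Library.Extended_Nat"
begin

text \<open>Indices from {0,1,...,omega} are rendered as enat (infinity = omega).\<close>

definition kripke_model ::
  "enat set \<Rightarrow> 'w set \<Rightarrow> (enat \<Rightarrow> ('w \<times> 'w) set) \<Rightarrow> ('p \<Rightarrow> 'w set) \<Rightarrow> bool" where
  "kripke_model S W R v \<longleftrightarrow>
     W \<noteq> {} \<and> (\<forall>\<beta>\<in>S. R \<beta> \<subseteq> W \<times> W) \<and> (\<forall>p. v p \<subseteq> W)"

definition RC_frame :: "enat set \<Rightarrow> 'w set \<Rightarrow> (enat \<Rightarrow> ('w \<times> 'w) set) \<Rightarrow> bool" where
  "RC_frame S W R \<longleftrightarrow>
     W \<noteq> {} \<and> (\<forall>\<beta>\<in>S. R \<beta> \<subseteq> W \<times> W) \<and>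
     (\<forall>\<beta>\<in>S. \<forall>\<gamma>\<in>S. R \<beta> O R \<gamma> \<subseteq> R (min \<beta> \<gamma>)) \<and>
     (\<forall>\<beta>\<in>S. \<forall>\<gamma>\<in>S. \<beta> > \<gamma> \<longrightarrow>
        (\<forall>x y z. (x, y) \<in> R \<beta> \<longrightarrow> (x, z) \<in> R \<gamma> \<longrightarrow> (y, z) \<in> R \<gamma>)) \<and>
     (\<forall>\<beta>\<in>S. \<forall>\<gamma>\<in>S. \<gamma> < \<beta> \<longrightarrow> R \<beta> \<subseteq> R \<gamma>)"

definition RC_model ::
  "enat set \<Rightarrow> 'w set \<Rightarrow> (enat \<Rightarrow> ('w \<times> 'w) set) \<Rightarrow> ('p \<Rightarrow> 'w set) \<Rightarrow> bool" where
  "RC_model S W R v \<longleftrightarrow> kripke_model S W R v \<and> RC_frame S W R"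

end

theory Submission
  imports Defs
begin

text \<open>
  Let \<open>P\<close> be the union of the \<open>R \<beta>\<close> with \<open>\<beta> > \<alpha>\<close>, and take for \<open>R \<alpha>\<close> the
  transitive closure of \<open>P\<close> together with the pairs of \<open>P\<close>-siblings (points with a
  common \<open>P\<close>-predecessor). Since \<open>R \<beta> \<subseteq> P\<close> and \<open>P O R \<beta> \<subseteq> P\<close>, the sibling pairs
  give condition J between \<open>R \<beta>\<close> and \<open>R \<alpha>\<close>. For \<open>\<gamma> < \<alpha>\<close>, \<open>P\<close> lies inside the
  transitive relation \<open>R \<gamma>\<close> and satisfies condition J with respect to it; both
  properties pass to sibling pairs and then to the transitive closure.
\<close>

definition euclidean_wrt :: "('a \<times> 'a) set \<Rightarrow> ('a \<times> 'a) set \<Rightarrow> bool" where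
  "euclidean_wrt A T \<longleftrightarrow> (\<forall>x y z. (x, y) \<in> A \<longrightarrow> (x, z) \<in> T \<longrightarrow> (y, z) \<in> T)"

definition sibling_trancl :: "('a \<times> 'a) set \<Rightarrow> ('a \<times> 'a) set" where
  "sibling_trancl P = (P \<union> P\<inverse> O P)\<^sup>+"

lemma euclidean_wrtD:
  "euclidean_wrt A T \<Longrightarrow> (x, y) \<in> A \<Longrightarrow> (x, z) \<in> T \<Longrightarrow> (y, z) \<in> T"
  unfolding euclidean_wrt_def by blast

lemma euclidean_wrt_trancl_left:
  assumes "euclidean_wrt A T"
  shows "euclidean_wrt (A\<^sup>+) T"
proof -
  have "(x, y) \<in> A\<^sup>+ \<Longrightarrow> (x, z) \<in> T \<longrightarrow> (y, z) \<in> T" for x y z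
    by (induction rule: trancl_induct) (use euclidean_wrtD[OF assms] in blast)+
  then show ?thesis unfolding euclidean_wrt_def by blast
qed

lemma euclidean_wrt_trancl_right:
  assumes "euclidean_wrt R A"
  shows "euclidean_wrt R (A\<^sup>+)"
proof -
  have "(x, z) \<in> A\<^sup>+ \<Longrightarrow> (x, y) \<in> R \<longrightarrow> (y, z) \<in> A\<^sup>+" for x y z
    by (induction rule: trancl_induct) (use euclidean_wrtD[OF assms] in \<open>blast intro: trancl_into_trancl\<close>)+
  then show ?thesis unfolding euclidean_wrt_def by blast
qed

lemma sibling_trancl_subset_Sigma: "P \<subseteq> A \<times> A \<Longrightarrow> sibling_trancl P \<subseteq> A \<times> A"
  unfolding sibling_trancl_def by (rule trancl_subset_Sigma) auto

lemma subset_sibling_trancl: "P \<subseteq> sibling_trancl P"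
  unfolding sibling_trancl_def by auto

lemma trans_sibling_trancl: "trans (sibling_trancl P)"
  unfolding sibling_trancl_def by (rule trans_trancl)

lemma sibling_trancl_subset:
  assumes "P \<subseteq> T" "trans T" "euclidean_wrt P T"
  shows "sibling_trancl P \<subseteq> T"
proof -
  have "P \<union> P\<inverse> O P \<subseteq> T"
    using assms(1) euclidean_wrtD[OF assms(3)] by blast
  then have "(P \<union> P\<inverse> O P)\<^sup>+ \<subseteq> T\<^sup>+" by (rule trancl_mono_subset)
  then show ?thesis unfolding sibling_trancl_def using assms(2) by simp
qed

lemma euclidean_wrt_sibling_trancl_left:
  assumes "P \<subseteq> T" "trans T" "euclidean_wrt P T"
  shows "euclidean_wrt (sibling_trancl P) T"
proof -
  have "euclidean_wrt (P \<union> P\<inverse> O P) T"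
    unfolding euclidean_wrt_def
    using assms(1) euclidean_wrtD[OF assms(3)] assms(2)[THEN transD] by blast
  then show ?thesis unfolding sibling_trancl_def by (rule euclidean_wrt_trancl_left)
qed

lemma euclidean_wrt_sibling_trancl_right:
  assumes "R' \<subseteq> P" "P O R' \<subseteq> P"
  shows "euclidean_wrt R' (sibling_trancl P)"
proof -
  have "euclidean_wrt R' (P \<union> P\<inverse> O P)"
    unfolding euclidean_wrt_def using assms by blast
  then show ?thesis unfolding sibling_trancl_def by (rule euclidean_wrt_trancl_right)
qed

lemma RC_frame_trans:
  assumes "RC_frame S W R" "\<beta> \<in> S"
  shows "trans (R \<beta>)"
proof -
  have "R \<beta> O R \<beta> \<subseteq> R \<beta>"
    using assms unfolding RC_frame_def by (metis min.idem)
  then show ?thesis by (blast intro: transI)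
qed

lemma RC_frame_insert:
  assumes "\<alpha> \<notin> S" "RC_frame S W R" "Q \<subseteq> W \<times> W" "trans Q"
    and below: "\<And>\<gamma>. \<gamma> \<in> S \<Longrightarrow> \<gamma> < \<alpha> \<Longrightarrow> Q \<subseteq> R \<gamma> \<and> euclidean_wrt Q (R \<gamma>)"
    and above: "\<And>\<beta>. \<beta> \<in> S \<Longrightarrow> \<alpha> < \<beta> \<Longrightarrow> R \<beta> \<subseteq> Q \<and> euclidean_wrt (R \<beta>) Q"
  shows "RC_frame (insert \<alpha> S) W (R(\<alpha> := Q))"
proof -
  let ?R = "R(\<alpha> := Q)"
  have mixed: "?R \<alpha> O ?R \<delta> \<union> ?R \<delta> O ?R \<alpha> \<subseteq> ?R (min \<alpha> \<delta>)" if "\<delta> \<in> S" for \<delta>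
  proof (cases "\<delta> < \<alpha>")
    case True
    then show ?thesis using that assms(1) below[OF that] RC_frame_trans[OF assms(2) that]
      by (auto simp: min_def dest: transD)
  next
    case False
    then have "\<alpha> < \<delta>" using that assms(1) by (metis linorder_neqE)
    then show ?thesis using that assms(1) above[OF that] \<open>trans Q\<close>
      by (auto simp: min_def dest: transD)
  qed
  have comp: "?R \<beta> O ?R \<gamma> \<subseteq> ?R (min \<beta> \<gamma>)"
    if "\<beta> \<in> insert \<alpha> S" "\<gamma> \<in> insert \<alpha> S" for \<beta> \<gamma>
  proof (cases "\<beta> = \<alpha>"; cases "\<gamma> = \<alpha>")
    assume "\<beta> = \<alpha>" "\<gamma> = \<alpha>"
    then show ?thesis using trans_O_subset[OF \<open>trans Q\<close>] by simp
  next
    assume "\<beta> = \<alpha>" "\<gamma> \<noteq> \<alpha>"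
    then show ?thesis using that mixed[of \<gamma>] by simp
  next
    assume "\<beta> \<noteq> \<alpha>" "\<gamma> = \<alpha>"
    then show ?thesis using that mixed[of \<beta>] by (simp add: min.commute)
  next
    assume "\<beta> \<noteq> \<alpha>" "\<gamma> \<noteq> \<alpha>"
    moreover from this have "min \<beta> \<gamma> \<noteq> \<alpha>" by (simp add: min_def)
    ultimately show ?thesis using that assms(2) unfolding RC_frame_def by simp
  qed
  have J: "euclidean_wrt (?R \<beta>) (?R \<gamma>)"
    if "\<beta> \<in> insert \<alpha> S" "\<gamma> \<in> insert \<alpha> S" "\<gamma> < \<beta>" for \<beta> \<gamma>
  proof (cases "\<beta> = \<alpha>")
    case True
    then show ?thesis using that below[of \<gamma>] by auto
  next
    case False
    show ?thesis
    proof (cases "\<gamma> = \<alpha>")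
      case True
      then show ?thesis using that \<open>\<beta> \<noteq> \<alpha>\<close> above[of \<beta>] by auto
    next
      case False
      then show ?thesis using that \<open>\<beta> \<noteq> \<alpha>\<close> assms(2)
        unfolding RC_frame_def euclidean_wrt_def by simp
    qed
  qed
  have mono: "?R \<beta> \<subseteq> ?R \<gamma>" if "\<beta> \<in> insert \<alpha> S" "\<gamma> \<in> insert \<alpha> S" "\<gamma> < \<beta>"
    for \<beta> \<gamma>
  proof (cases "\<beta> = \<alpha>")
    case True
    then show ?thesis using that below[of \<gamma>] by auto
  next
    case False
    then show ?thesis using that above[of \<beta>] assms(2)
      unfolding RC_frame_def by (cases "\<gamma> = \<alpha>") auto
  qed
  show ?thesis
    unfolding RC_frame_def
  proof (intro conjI)
    show "W \<noteq> {}" "\<forall>\<beta>\<in>insert \<alpha> S. ?R \<beta> \<subseteq> W \<times> W"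
      using assms(1-3) unfolding RC_frame_def by auto
    show "\<forall>\<beta>\<in>insert \<alpha> S. \<forall>\<gamma>\<in>insert \<alpha> S. ?R \<beta> O ?R \<gamma> \<subseteq> ?R (min \<beta> \<gamma>)"
      using comp by blast
    show "\<forall>\<beta>\<in>insert \<alpha> S. \<forall>\<gamma>\<in>insert \<alpha> S. \<gamma> < \<beta> \<longrightarrow>
        (\<forall>x y z. (x, y) \<in> ?R \<beta> \<longrightarrow> (x, z) \<in> ?R \<gamma> \<longrightarrow> (y, z) \<in> ?R \<gamma>)"
      using J unfolding euclidean_wrt_def by blast
    show "\<forall>\<beta>\<in>insert \<alpha> S. \<forall>\<gamma>\<in>insert \<alpha> S. \<gamma> < \<beta> \<longrightarrow> ?R \<beta> \<subseteq> ?R \<gamma>"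
      using mono by blast
  qed
qed

lemma RC_frame_Union_above:
  fixes \<alpha> :: enat
  assumes "RC_frame S W R"
  defines "P \<equiv> \<Union>\<beta>\<in>{\<beta> \<in> S. \<alpha> < \<beta>}. R \<beta>"
  shows "P \<subseteq> W \<times> W"
    and "\<beta> \<in> S \<Longrightarrow> \<alpha> < \<beta> \<Longrightarrow> R \<beta> \<subseteq> P \<and> P O R \<beta> \<subseteq> P"
    and "\<gamma> \<in> S \<Longrightarrow> \<gamma> < \<alpha> \<Longrightarrow> P \<subseteq> R \<gamma> \<and> euclidean_wrt P (R \<gamma>)"
proof -
  show "P \<subseteq> W \<times> W"
    using assms unfolding RC_frame_def by blast
next
  assume "\<beta> \<in> S" "\<alpha> < \<beta>"
  moreover have "R \<delta> O R \<beta> \<subseteq> P" if "\<delta> \<in> S" "\<alpha> < \<delta>" for \<delta>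
  proof -
    have "min \<delta> \<beta> \<in> {\<beta> \<in> S. \<alpha> < \<beta>}"
      using that \<open>\<beta> \<in> S\<close> \<open>\<alpha> < \<beta>\<close> by (simp add: min_def)
    then show ?thesis
      using assms(1) that \<open>\<beta> \<in> S\<close> unfolding RC_frame_def P_def by blast
  qed
  ultimately show "R \<beta> \<subseteq> P \<and> P O R \<beta> \<subseteq> P"
    unfolding P_def by blast
next
  assume "\<gamma> \<in> S" "\<gamma> < \<alpha>"
  have "R \<delta> \<subseteq> R \<gamma> \<and> euclidean_wrt (R \<delta>) (R \<gamma>)" if "\<delta> \<in> S" "\<alpha> < \<delta>" for \<delta>
  proof -
    have "\<gamma> < \<delta>" using \<open>\<gamma> < \<alpha>\<close> \<open>\<alpha> < \<delta>\<close> by (rule less_trans)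
    then show ?thesis
      using assms(1) that \<open>\<gamma> \<in> S\<close> unfolding RC_frame_def euclidean_wrt_def by blast
  qed
  then show "P \<subseteq> R \<gamma> \<and> euclidean_wrt P (R \<gamma>)"
    unfolding P_def euclidean_wrt_def by blast
qed

theorem lemma4p4:
  fixes S :: "enat set" and \<alpha> :: enat
    and W :: "'w set" and R :: "enat \<Rightarrow> ('w \<times> 'w) set" and v :: "'p \<Rightarrow> 'w set"
  assumes "\<alpha> \<notin> S"
    and "RC_model S W R v"
  shows "\<exists>Q. Q \<subseteq> W \<times> W \<and> RC_model (insert \<alpha> S) W (R(\<alpha> := Q)) v"
proof -
  have F: "RC_frame S W R" and K: "kripke_model S W R v"
    using assms(2) unfolding RC_model_def by auto
  define P where "P = (\<Union>\<beta>\<in>{\<beta> \<in> S. \<alpha> < \<beta>}. R \<beta>)"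
  note P = RC_frame_Union_above[OF F, where \<alpha> = \<alpha>, folded P_def]
  define Q where "Q = sibling_trancl P"
  have QW: "Q \<subseteq> W \<times> W"
    unfolding Q_def by (rule sibling_trancl_subset_Sigma) (fact P(1))
  have "RC_frame (insert \<alpha> S) W (R(\<alpha> := Q))"
  proof (rule RC_frame_insert[OF assms(1) F QW])
    show "trans Q" unfolding Q_def by (rule trans_sibling_trancl)
  next
    fix \<gamma> assume "\<gamma> \<in> S" "\<gamma> < \<alpha>"
    moreover have "trans (R \<gamma>)" using F \<open>\<gamma> \<in> S\<close> by (rule RC_frame_trans)
    ultimately show "Q \<subseteq> R \<gamma> \<and> euclidean_wrt Q (R \<gamma>)"
      using P(3) unfolding Q_def
      by (simp add: sibling_trancl_subset euclidean_wrt_sibling_trancl_left)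
  next
    fix \<beta> assume "\<beta> \<in> S" "\<alpha> < \<beta>"
    with P(2) have "R \<beta> \<subseteq> P" "P O R \<beta> \<subseteq> P" by auto
    then show "R \<beta> \<subseteq> Q \<and> euclidean_wrt (R \<beta>) Q"
      unfolding Q_def
      by (meson order_trans subset_sibling_trancl euclidean_wrt_sibling_trancl_right)
  qed
  moreover have "kripke_model (insert \<alpha> S) W (R(\<alpha> := Q)) v"
    using K QW assms(1) unfolding kripke_model_def by auto
  ultimately show ?thesis
    using QW unfolding RC_model_def by blast
qed

end
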